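(* Let $a(s),b(s)\in\mathbb{C}[s]$ be two nonzero polynomials, and let $(a\bullet b)(s)\in\mathbb{C}[s]$ be the monic polynomial such that $$\langle a(s),b(t)\rangle\cap\mathbb{C}[s+t]=\langle (a\bullet b)(s+t)\rangle,$$ where $\langle a(s),b(t)\rangle$ is the ideal generated by $a(s)$ and $b(t)$ in $\mathbb{C}[s,t]$, and the intersection is an ideal of the subring $\mathbb{C}[s+t]\subseteq\mathbb{C}[s,t]$. Then $a\bullet b=a*b$.
   Context: For a polynomial $p(s)\in\mathbb{C}[s]$, let $R_p\subseteq\mathbb{C}$ denote the set of the opposites of its roots (i.e. $\alpha\in R_p$ iff $p(-\alpha)=0$). For $\alpha\in R_p$, $m_\alpha(p)$ denotes the multiplicity of $-\alpha$ as a root of $p$. For nonzero $a,b\in\mathbb{C}[s]$, the star operation $a*b\in\mathbb{C}[s]$ is the monic polynomial with $R_{a*b}=R_a+R_b=\{\alpha+\beta:\alpha\in R_a,\beta\in R_b\}$ (with the convention that the sum of the empty set with any set is empty, so $a*b=1$ if $a$ or $b$ is constant) and, for every $\gamma\in R_{a*b}$, multiplicity $m_\gamma(a*b)=\max\{m_\alpha(a)+m_\beta(b)-1:\alpha\in R_a,\beta\in R_b,\ \alpha+\beta=\gamma\}$. *)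

theory Defs
  imports "HOL-Computational_Algebra.Polynomial"
begin

text \<open>Bivariate polynomials in s,t are represented as complex poly poly:
  the outer variable is s, the coefficients are polynomials in t.\<close>

definition Rset :: "complex poly \<Rightarrow> complex set" where
  "Rset p = {\<alpha>. poly p (- \<alpha>) = 0}"

definition mult_at :: "complex \<Rightarrow> complex poly \<Rightarrow> nat" where
  "mult_at \<alpha> p = order (- \<alpha>) p"

definition star :: "complex poly \<Rightarrow> complex poly \<Rightarrow> complex poly" where
  "star a b = (\<Prod>\<gamma> \<in> {\<alpha> + \<beta> | \<alpha> \<beta>. \<alpha> \<in> Rset a \<and> \<beta> \<in> Rset b}.
      [:\<gamma>, 1:] ^ Max {mult_at \<alpha> a + mult_at \<beta> b - 1 | \<alpha> \<beta>.
                          \<alpha> \<in> Rset a \<and> \<beta> \<in> Rset b \<and> \<alpha> + \<beta> = \<gamma>})"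

definition in_s :: "complex poly \<Rightarrow> complex poly poly" where
  "in_s p = map_poly (\<lambda>c. [:c:]) p"

definition in_t :: "complex poly \<Rightarrow> complex poly poly" where
  "in_t p = [:p:]"

text \<open>p(s+t).\<close>
definition in_sum :: "complex poly \<Rightarrow> complex poly poly" where
  "in_sum p = pcompose (in_s p) [:[:0, 1:], 1:]"

definition ideal_st :: "complex poly \<Rightarrow> complex poly \<Rightarrow> complex poly poly set" where
  "ideal_st a b = {f * in_s a + g * in_t b | f g. True}"

definition sum_ring :: "complex poly poly set" where
  "sum_ring = range in_sum"

definition princ_sum :: "complex poly \<Rightarrow> complex poly poly set" where
  "princ_sum c = {r * in_sum c | r. r \<in> sum_ring}"

definition is_bullet :: "complex poly \<Rightarrow> complex poly \<Rightarrow> complex poly \<Rightarrow> bool" where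
  "is_bullet a b c \<longleftrightarrow> lead_coeff c = 1 \<and> ideal_st a b \<inter> sum_ring = princ_sum c"

end

theory Submission
  imports
    Defs
    "HOL-Computational_Algebra.Fundamental_Theorem_Algebra"
    "HOL-Computational_Algebra.Polynomial_Factorial"
    "HOL-Computational_Algebra.Field_as_Ring"
begin

text \<open>
  By Bezout in each variable separately, the ideal \<open>\<langle>a(s), b(t)\<rangle>\<close> is the intersection of the
  ideals \<open>\<langle>(s + \<alpha>)^m, (t + \<beta>)^n\<rangle>\<close>, where \<open>-\<alpha>\<close> runs through the roots of \<open>a\<close> with
  multiplicity \<open>m\<close> and \<open>-\<beta>\<close> through the roots of \<open>b\<close> with multiplicity \<open>n\<close>. For one such pair,
  \<open>p(s + t)\<close> lies in \<open>\<langle>(s + \<alpha>)^m, (t + \<beta>)^n\<rangle>\<close> iff \<open>(x + \<alpha> + \<beta>)^(m+n-1)\<close> divides \<open>p\<close>: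
  sufficiency comes from the binomial expansion of \<open>((s + \<alpha>) + (t + \<beta>))^(m+n-1)\<close>; for
  necessity, putting \<open>s = -\<alpha>\<close> settles \<open>m = 1\<close>, and differentiating in \<open>s\<close> lowers \<open>m\<close> by one
  while lowering the order of the root \<open>-(\<alpha> + \<beta>)\<close> of \<open>p\<close> by one. Hence \<open>p(s + t)\<close> lies in
  \<open>\<langle>a(s), b(t)\<rangle>\<close> iff \<open>a * b\<close> divides \<open>p\<close>, and since \<open>p \<mapsto> p(s + t)\<close> is an injective ring
  homomorphism, the intersection with \<open>\<complex>[s + t]\<close> is generated by \<open>(a * b)(s + t)\<close>; a monic
  generator of a principal ideal is unique.
\<close>

lemma coeff_in_s [simp]: "coeff (in_s p) i = [:coeff p i:]"
  by (simp add: in_s_def coeff_map_poly)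

lemma in_s_0 [simp]: "in_s 0 = 0"
  by (rule poly_eqI) simp

lemma in_s_1 [simp]: "in_s 1 = 1"
  by (rule poly_eqI) (simp add: coeff_1)

lemma in_s_pCons [simp]: "in_s (pCons c p) = pCons [:c:] (in_s p)"
  by (rule poly_eqI) (simp add: coeff_pCons split: nat.splits)

lemma in_s_add [simp]: "in_s (p + q) = in_s p + in_s q"
  by (rule poly_eqI) simp

lemma in_s_smult [simp]: "in_s (smult c p) = smult [:c:] (in_s p)"
  by (rule poly_eqI) simp

lemma in_s_mult [simp]: "in_s (p * q) = in_s p * in_s q"
  by (induction p) (simp_all add: algebra_simps)

lemma in_s_power [simp]: "in_s (p ^ n) = in_s p ^ n"
  by (induction n) simp_all

lemma pderiv_in_s: "pderiv (in_s p) = in_s (pderiv p)"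
  by (induction p) (simp_all add: pderiv_pCons)

lemma in_t_mult [simp]: "in_t (p * q) = in_t p * in_t q"
  by (simp add: in_t_def)

lemma in_t_1 [simp]: "in_t 1 = 1"
  by (simp add: in_t_def one_pCons)

lemma in_t_add [simp]: "in_t (p + q) = in_t p + in_t q"
  by (simp add: in_t_def)

lemma in_t_power [simp]: "in_t (p ^ n) = in_t p ^ n"
  by (induction n) simp_all

lemma pderiv_in_t [simp]: "pderiv (in_t p) = 0"
  by (simp add: in_t_def)

lemma poly_in_t [simp]: "poly (in_t p) x = p"
  by (simp add: in_t_def)

lemma in_sum_add [simp]: "in_sum (p + q) = in_sum p + in_sum q"
  by (simp add: in_sum_def pcompose_add)

lemma in_sum_mult [simp]: "in_sum (p * q) = in_sum p * in_sum q"
  by (simp add: in_sum_def pcompose_mult)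

lemma in_sum_1 [simp]: "in_sum 1 = 1"
  by (simp add: in_sum_def pcompose_1)

lemma in_sum_power [simp]: "in_sum (p ^ n) = in_sum p ^ n"
  by (induction n) simp_all

lemma in_sum_eq_0_iff [simp]: "in_sum p = 0 \<longleftrightarrow> p = 0"
  by (simp add: in_sum_def pcompose_eq_0_iff map_poly_eq_0_iff in_s_def)

lemma in_sum_inject: "in_sum p = in_sum q \<longleftrightarrow> p = q"
proof
  assume "in_sum p = in_sum q"
  moreover have "in_sum (p - q) + in_sum q = in_sum p"
    by (simp flip: in_sum_add)
  ultimately have "in_sum (p - q) = 0" by simp
  then show "p = q" by simp
qed simp

lemma pderiv_in_sum: "pderiv (in_sum p) = in_sum (pderiv p)"
  by (simp add: in_sum_def pderiv_pcompose pderiv_in_s pderiv_pCons)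

lemma in_sum_linear: "in_sum [:\<alpha> + \<beta>, 1:] = in_s [:\<alpha>, 1:] + in_t [:\<beta>, 1:]"
  by (simp add: in_sum_def in_t_def pcompose_pCons one_pCons)

lemma poly_in_sum_const: "poly (in_sum p) [:c:] = pcompose p [:c, 1:]"
  unfolding in_sum_def poly_pcompose by (simp add: pcompose_altdef in_s_def)

lemma mem_ideal_st_iff: "F \<in> ideal_st a b \<longleftrightarrow> (\<exists>f g. F = f * in_s a + g * in_t b)"
  by (simp add: ideal_st_def)

lemma ideal_st_add:
  assumes "F \<in> ideal_st a b" "G \<in> ideal_st a b"
  shows "F + G \<in> ideal_st a b"
proof -
  obtain f g f' g' where "F = f * in_s a + g * in_t b" "G = f' * in_s a + g' * in_t b"
    using assms by (auto simp: mem_ideal_st_iff)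
  then have "F + G = (f + f') * in_s a + (g + g') * in_t b" by (simp add: algebra_simps)
  then show ?thesis by (auto simp: mem_ideal_st_iff)
qed

lemma ideal_st_mult:
  assumes "F \<in> ideal_st a b"
  shows "H * F \<in> ideal_st a b"
proof -
  obtain f g where "F = f * in_s a + g * in_t b" using assms by (auto simp: mem_ideal_st_iff)
  then have "H * F = (H * f) * in_s a + (H * g) * in_t b" by (simp add: algebra_simps)
  then show ?thesis by (auto simp: mem_ideal_st_iff)
qed

lemma in_s_mult_mem_ideal_st: "H * in_s a \<in> ideal_st a b"
  unfolding mem_ideal_st_iff by (rule exI[of _ H], rule exI[of _ 0]) simp

lemma in_t_mult_mem_ideal_st: "H * in_t b \<in> ideal_st a b"
  unfolding mem_ideal_st_iff by (rule exI[of _ 0], rule exI[of _ H]) simp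

lemma ideal_st_sum: "(\<And>k. k \<in> A \<Longrightarrow> F k \<in> ideal_st a b) \<Longrightarrow> sum F A \<in> ideal_st a b"
  using in_s_mult_mem_ideal_st[of 0 a b]
  by (induction A rule: infinite_finite_induct) (simp_all add: ideal_st_add)

lemma ideal_st_antimono:
  assumes "a' dvd a" "b' dvd b"
  shows "ideal_st a b \<subseteq> ideal_st a' b'"
proof
  fix F assume "F \<in> ideal_st a b"
  then obtain f g where F: "F = f * in_s a + g * in_t b" by (auto simp: mem_ideal_st_iff)
  obtain k l where "a = a' * k" "b = b' * l" using assms by (elim dvdE)
  then have "F = (f * in_s k) * in_s a' + (g * in_t l) * in_t b'"
    by (simp add: F algebra_simps)
  then show "F \<in> ideal_st a' b'" by (auto simp: mem_ideal_st_iff)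
qed

lemma ideal_st_const_left:
  assumes "c \<noteq> 0"
  shows "F \<in> ideal_st [:c:] b"
proof -
  have "in_s [:1 / c:] * in_s [:c:] = 1"
    using assms by (simp flip: in_s_mult add: one_pCons)
  then have "F = (F * in_s [:1 / c:]) * in_s [:c:]"
    by (simp only: mult.assoc mult_1_right)
  then show ?thesis
    by (metis in_s_mult_mem_ideal_st)
qed

lemma ideal_st_const_right:
  assumes "c \<noteq> 0"
  shows "F \<in> ideal_st a [:c:]"
proof -
  have "in_t [:1 / c:] * in_t [:c:] = 1"
    using assms by (simp flip: in_t_mult add: in_t_def one_pCons)
  then have "F = (F * in_t [:1 / c:]) * in_t [:c:]"
    by (simp only: mult.assoc mult_1_right)
  then show ?thesis
    by (metis in_t_mult_mem_ideal_st)
qed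

lemma bezout_combination:
  fixes u v A1 A2 B F :: "'a::comm_ring_1"
  assumes "u * A1 + v * A2 = 1" "F = f1 * A1 + g1 * B" "F = f2 * A2 + g2 * B"
  shows "F = (u * f2 + v * f1) * (A1 * A2) + (u * A1 * g2 + v * A2 * g1) * B"
proof -
  have "F = (u * A1 + v * A2) * F" by (simp add: assms(1))
  also have "\<dots> = u * A1 * F + v * A2 * F" by (simp add: algebra_simps)
  also have "\<dots> = (u * f2 + v * f1) * (A1 * A2) + (u * A1 * g2 + v * A2 * g1) * B"
    by (subst (1) assms(3), subst assms(2)) (simp add: algebra_simps)
  finally show ?thesis .
qed

lemma coprime_bezoutE:
  fixes p q :: "'a::euclidean_ring_gcd"
  assumes "coprime p q"
  obtains u v where "u * p + v * q = 1"
  using bezout_coefficients_fst_snd[of p q] coprime_imp_gcd_eq_1[OF assms] by simp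

lemma ideal_st_coprime_mult_left:
  assumes "coprime a1 a2" "F \<in> ideal_st a1 b" "F \<in> ideal_st a2 b"
  shows "F \<in> ideal_st (a1 * a2) b"
proof -
  obtain u v where "u * a1 + v * a2 = 1" using assms(1) by (rule coprime_bezoutE)
  then have "in_s u * in_s a1 + in_s v * in_s a2 = 1" by (simp flip: in_s_mult in_s_add)
  moreover obtain f1 g1 where "F = f1 * in_s a1 + g1 * in_t b"
    using assms(2) unfolding mem_ideal_st_iff by blast
  moreover obtain f2 g2 where "F = f2 * in_s a2 + g2 * in_t b"
    using assms(3) unfolding mem_ideal_st_iff by blast
  ultimately show ?thesis
    unfolding mem_ideal_st_iff in_s_mult by (blast intro: bezout_combination)
qed

lemma ideal_st_coprime_mult_right:
  assumes "coprime b1 b2" "F \<in> ideal_st a b1" "F \<in> ideal_st a b2"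
  shows "F \<in> ideal_st a (b1 * b2)"
proof -
  obtain u v where "u * b1 + v * b2 = 1" using assms(1) by (rule coprime_bezoutE)
  then have "in_t u * in_t b1 + in_t v * in_t b2 = 1" by (simp flip: in_t_mult in_t_add)
  moreover obtain f1 g1 where "F = g1 * in_t b1 + f1 * in_s a"
    using assms(2) unfolding mem_ideal_st_iff by (blast intro: add.commute)
  moreover obtain f2 g2 where "F = g2 * in_t b2 + f2 * in_s a"
    using assms(3) unfolding mem_ideal_st_iff by (blast intro: add.commute)
  ultimately have "\<exists>g f. F = g * (in_t b1 * in_t b2) + f * in_s a"
    by (blast intro: bezout_combination)
  then show ?thesis
    unfolding mem_ideal_st_iff in_t_mult by (metis add.commute)
qed

lemma pcompose_power_left: "pcompose (p ^ n) q = pcompose p q ^ n"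
  by (induction n) (simp_all add: pcompose_mult pcompose_1)

lemma pcompose_linear_power: "pcompose ([:\<beta>, 1:] ^ n) [:\<alpha>, 1:] = [:\<alpha> + \<beta>, 1:] ^ n"
  by (simp add: pcompose_power_left pcompose_pCons one_pCons add.commute)

lemma pcompose_dvd_if_in_sum_mem_ideal_st:
  assumes "in_sum p \<in> ideal_st [:\<alpha>, 1:] b"
  shows "pcompose b [:\<alpha>, 1:] dvd p"
proof -
  obtain f g where F: "in_sum p = f * in_s [:\<alpha>, 1:] + g * in_t b"
    using assms unfolding mem_ideal_st_iff by blast
  have "pcompose p [:-\<alpha>, 1:] = poly (in_sum p) [:-\<alpha>:]"
    by (simp add: poly_in_sum_const)
  also have "\<dots> = poly g [:-\<alpha>:] * b"
    unfolding F by simp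
  finally have "b dvd pcompose p [:-\<alpha>, 1:]" by simp
  then have "pcompose b [:\<alpha>, 1:] dvd pcompose (pcompose p [:-\<alpha>, 1:]) [:\<alpha>, 1:]"
    by (auto simp: pcompose_mult)
  also have "pcompose (pcompose p [:-\<alpha>, 1:]) [:\<alpha>, 1:] = p"
    by (simp flip: pcompose_assoc add: pcompose_pCons one_pCons)
  finally show ?thesis .
qed

lemma pderiv_mem_ideal_st_power:
  assumes "F \<in> ideal_st (q ^ Suc m) b"
  shows "pderiv F \<in> ideal_st (q ^ m) b"
proof -
  obtain f g where F: "F = f * in_s (q ^ Suc m) + g * in_t b"
    using assms unfolding mem_ideal_st_iff by blast
  have "pderiv F = f * (smult (of_nat (Suc m)) (in_s q ^ m) * pderiv (in_s q))
      + (in_s q ^ Suc m * pderiv f + in_t b * pderiv g)"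
    unfolding F in_s_power
    by (simp only: pderiv_add pderiv_mult pderiv_power_Suc pderiv_in_t mult_zero_right add_0 add.assoc)
  also have "\<dots> = (pderiv f * in_s q + smult (of_nat (Suc m)) (f * pderiv (in_s q))) * in_s q ^ m
      + pderiv g * in_t b"
    by (simp add: algebra_simps)
  finally show ?thesis
    unfolding mem_ideal_st_iff in_s_power by blast
qed

lemma linear_power_Suc_dvd_if_dvd_pderiv:
  fixes p :: "'a::field_char_0 poly"
  assumes "[:c, 1:] dvd p" and "[:c, 1:] ^ k dvd pderiv p"
  shows "[:c, 1:] ^ Suc k dvd p"
proof (cases "p = 0")
  case False
  have root: "poly p (-c) = 0"
    using assms(1) by (simp add: poly_eq_0_iff_dvd)
  have "pderiv p \<noteq> 0"
  proof
    assume "pderiv p = 0"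
    then obtain d where "p = [:d:]" by (auto simp: pderiv_eq_0_iff elim: degree_eq_zeroE)
    with root False show False by simp
  qed
  with assms(2) have "k \<le> order (-c) (pderiv p)"
    using order_divides[of "-c" k "pderiv p"] by simp
  also have "order (-c) (pderiv p) < order (-c) p"
    using order_pderiv[OF False root] by simp
  finally show ?thesis
    using order_divides[of "-c" "Suc k" p] by simp
qed simp

lemma dvd_if_in_sum_mem_ideal_st_linear_powers:
  assumes "in_sum p \<in> ideal_st ([:\<alpha>, 1:] ^ Suc m) ([:\<beta>, 1:] ^ Suc n)"
  shows "[:\<alpha> + \<beta>, 1:] ^ Suc (m + n) dvd p"
  using assms
proof (induction m arbitrary: p)
  case 0
  then show ?case
    using pcompose_dvd_if_in_sum_mem_ideal_st[of p \<alpha> "[:\<beta>, 1:] ^ Suc n"]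
    by (simp only: power_Suc0_right pcompose_linear_power add_0)
next
  case (Suc m)
  have "in_sum (pderiv p) \<in> ideal_st ([:\<alpha>, 1:] ^ Suc m) ([:\<beta>, 1:] ^ Suc n)"
    using pderiv_mem_ideal_st_power[OF Suc.prems] by (simp add: pderiv_in_sum)
  then have IH: "[:\<alpha> + \<beta>, 1:] ^ Suc (m + n) dvd pderiv p"
    by (rule Suc.IH)
  have "[:\<alpha>, 1:] dvd [:\<alpha>, 1:] ^ Suc (Suc m)"
    by (rule dvd_power) simp
  then have "in_sum p \<in> ideal_st [:\<alpha>, 1:] ([:\<beta>, 1:] ^ Suc n)"
    using ideal_st_antimono[OF _ dvd_refl] Suc.prems by blast
  then have "[:\<alpha> + \<beta>, 1:] ^ Suc n dvd p"
    using pcompose_dvd_if_in_sum_mem_ideal_st[of p \<alpha> "[:\<beta>, 1:] ^ Suc n"]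
    by (simp only: pcompose_linear_power)
  then have "[:\<alpha> + \<beta>, 1:] dvd p"
    using dvd_power[of "Suc n" "[:\<alpha> + \<beta>, 1:]"] dvd_trans by blast
  from linear_power_Suc_dvd_if_dvd_pderiv[OF this IH] show ?case
    by (simp only: add_Suc)
qed

lemma in_sum_linear_power_mem_ideal_st:
  "in_sum ([:\<alpha> + \<beta>, 1:] ^ (m + n - 1)) \<in> ideal_st ([:\<alpha>, 1:] ^ m) ([:\<beta>, 1:] ^ n)"
proof -
  define X Y N where "X = in_s [:\<alpha>, 1:]" and "Y = in_t [:\<beta>, 1:]" and "N = m + n - 1"
  have "in_sum ([:\<alpha> + \<beta>, 1:] ^ N) = (\<Sum>k\<le>N. of_nat (N choose k) * X ^ k * Y ^ (N - k))"
    by (simp add: in_sum_linear X_def Y_def binomial_ring)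
  also have "\<dots> \<in> ideal_st ([:\<alpha>, 1:] ^ m) ([:\<beta>, 1:] ^ n)"
  proof (rule ideal_st_sum)
    fix k assume "k \<in> {..N}"
    show "of_nat (N choose k) * X ^ k * Y ^ (N - k) \<in> ideal_st ([:\<alpha>, 1:] ^ m) ([:\<beta>, 1:] ^ n)"
    proof (cases "m \<le> k")
      case True
      then have "of_nat (N choose k) * X ^ k * Y ^ (N - k)
          = (of_nat (N choose k) * X ^ (k - m) * Y ^ (N - k)) * in_s ([:\<alpha>, 1:] ^ m)"
        by (simp add: X_def algebra_simps flip: power_add)
      then show ?thesis by (simp only: in_s_mult_mem_ideal_st)
    next
      case False
      then have "n \<le> N - k" using N_def by auto
      then have "N - k = (N - k - n) + n" by simp
      then have "Y ^ (N - k) = Y ^ (N - k - n) * Y ^ n" by (metis power_add)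
      then have "of_nat (N choose k) * X ^ k * Y ^ (N - k)
          = (of_nat (N choose k) * X ^ k * Y ^ (N - k - n)) * in_t ([:\<beta>, 1:] ^ n)"
        by (simp add: Y_def algebra_simps)
      then show ?thesis by (simp only: in_t_mult_mem_ideal_st)
    qed
  qed
  finally show ?thesis unfolding N_def .
qed

lemma in_sum_mem_ideal_st_linear_powers_iff:
  assumes "m > 0" and "n > 0"
  shows "in_sum p \<in> ideal_st ([:\<alpha>, 1:] ^ m) ([:\<beta>, 1:] ^ n) \<longleftrightarrow> [:\<alpha> + \<beta>, 1:] ^ (m + n - 1) dvd p"
proof
  assume "in_sum p \<in> ideal_st ([:\<alpha>, 1:] ^ m) ([:\<beta>, 1:] ^ n)"
  moreover have "Suc (m - 1) = m" "Suc (n - 1) = n" "Suc (m - 1 + (n - 1)) = m + n - 1"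
    using assms by simp_all
  ultimately show "[:\<alpha> + \<beta>, 1:] ^ (m + n - 1) dvd p"
    using dvd_if_in_sum_mem_ideal_st_linear_powers[of p \<alpha> "m - 1" \<beta> "n - 1"] by (simp only:)
next
  assume "[:\<alpha> + \<beta>, 1:] ^ (m + n - 1) dvd p"
  then obtain r where "p = r * [:\<alpha> + \<beta>, 1:] ^ (m + n - 1)" by (auto elim: dvdE simp: mult.commute)
  then show "in_sum p \<in> ideal_st ([:\<alpha>, 1:] ^ m) ([:\<beta>, 1:] ^ n)"
    using ideal_st_mult[OF in_sum_linear_power_mem_ideal_st] by (simp del: in_sum_power)
qed

lemma Rset_mult: "Rset (p * q) = Rset p \<union> Rset q"
  by (auto simp: Rset_def)

lemma finite_Rset: "p \<noteq> 0 \<Longrightarrow> finite (Rset p)"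
proof -
  assume "p \<noteq> 0"
  then have "finite (uminus -` {x. poly p x = 0})"
    by (intro finite_vimageI poly_roots_finite) (simp_all add: inj_def)
  then show ?thesis by (simp add: Rset_def vimage_def)
qed

lemma mult_at_mult: "p * q \<noteq> 0 \<Longrightarrow> mult_at \<alpha> (p * q) = mult_at \<alpha> p + mult_at \<alpha> q"
  by (simp add: mult_at_def order_mult)

lemma mult_at_linear_power: "mult_at \<alpha> ([:\<beta>, 1:] ^ n) = (if \<alpha> = \<beta> then n else 0)"
proof (cases "\<alpha> = \<beta>")
  case True
  then show ?thesis
    using order_power_n_n[of "-\<beta>" n] by (simp add: mult_at_def)
next
  case False
  then have "poly ([:\<beta>, 1:] ^ n) (-\<alpha>) \<noteq> 0"
    by (simp add: poly_power)
  then show ?thesis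
    using False by (simp add: mult_at_def order_0I)
qed

lemma mult_at_pos: "p \<noteq> 0 \<Longrightarrow> \<alpha> \<in> Rset p \<Longrightarrow> mult_at \<alpha> p > 0"
  by (simp add: Rset_def mult_at_def order_root)

lemma linear_power_mult_at_dvd: "[:\<alpha>, 1:] ^ mult_at \<alpha> p dvd p"
  using order_1[of "-\<alpha>" p] by (simp add: mult_at_def)

lemma coprime_linear_power_left:
  fixes p :: "complex poly"
  assumes "poly p (-\<alpha>) \<noteq> 0"
  shows "coprime ([:\<alpha>, 1:] ^ n) p"
proof -
  have "\<not> [:-(-\<alpha>), 1:] dvd p"
    using assms by (simp only: poly_eq_0_iff_dvd[symmetric]) simp
  then have "coprime [:\<alpha>, 1:] p"
    by (intro prime_elem_imp_coprime prime_elem_linear_field_poly) simp_all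
  then show ?thesis by (simp add: coprime_power_left_iff)
qed

lemma coprime_linear_powers:
  fixes \<alpha> \<beta> :: complex
  assumes "\<alpha> \<noteq> \<beta>"
  shows "coprime ([:\<alpha>, 1:] ^ i) ([:\<beta>, 1:] ^ j)"
  using assms by (intro coprime_linear_power_left) (simp add: poly_power)

lemma complex_poly_root_powers_induct:
  fixes P :: "complex poly \<Rightarrow> bool"
  assumes const: "\<And>c. c \<noteq> 0 \<Longrightarrow> P [:c:]"
    and coprime_mult: "\<And>p q. coprime p q \<Longrightarrow> P p \<Longrightarrow> P q \<Longrightarrow> P (p * q)"
    and "a \<noteq> 0"
    and "\<And>\<alpha>. \<alpha> \<in> Rset a \<Longrightarrow> P ([:\<alpha>, 1:] ^ mult_at \<alpha> a)"
  shows "P a"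
  using assms(3,4)
proof (induction a rule: poly_root_order_induct)
  case 0
  then show ?case by simp
next
  case (no_roots p)
  then have "degree p = 0"
    using fundamental_theorem_of_algebra constant_degree by blast
  then obtain c where "p = [:c:]" by (elim degree_eq_zeroE)
  with no_roots.prems(1) show ?case by (simp add: const)
next
  case (root p x n)
  let ?a = "[:-x, 1:] ^ n * p"
  have "-x \<in> Rset ?a"
    using root.hyps(1) by (simp add: Rset_def)
  moreover have "mult_at (-x) p = 0"
    using root.hyps(2) by (simp add: mult_at_def order_0I)
  then have "mult_at (-x) ?a = n"
    using root.prems(1) by (simp add: mult_at_mult mult_at_linear_power)
  ultimately have "P ([:-x, 1:] ^ n)"
    using root.prems(2)[of "-x"] by simp
  moreover have "P p"
  proof (rule root.IH)
    show "p \<noteq> 0" using root.prems(1) by simp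
    fix \<alpha> assume "\<alpha> \<in> Rset p"
    moreover from this have "\<alpha> \<noteq> -x"
      using root.hyps(2) by (auto simp: Rset_def)
    ultimately show "P ([:\<alpha>, 1:] ^ mult_at \<alpha> p)"
      using root.prems(2)[of \<alpha>] root.prems(1)
      by (simp add: Rset_mult mult_at_mult mult_at_linear_power)
  qed
  moreover have "coprime ([:-x, 1:] ^ n) p"
    using root.hyps(2) by (intro coprime_linear_power_left) simp
  ultimately show ?case by (rule coprime_mult[rotated])
qed

lemma mem_ideal_st_iff_root_powers:
  assumes "a \<noteq> 0" and "b \<noteq> 0"
  shows "F \<in> ideal_st a b \<longleftrightarrow>
    (\<forall>\<alpha>\<in>Rset a. \<forall>\<beta>\<in>Rset b. F \<in> ideal_st ([:\<alpha>, 1:] ^ mult_at \<alpha> a) ([:\<beta>, 1:] ^ mult_at \<beta> b))"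
proof
  assume "F \<in> ideal_st a b"
  then show "\<forall>\<alpha>\<in>Rset a. \<forall>\<beta>\<in>Rset b. F \<in> ideal_st ([:\<alpha>, 1:] ^ mult_at \<alpha> a) ([:\<beta>, 1:] ^ mult_at \<beta> b)"
    using ideal_st_antimono[OF linear_power_mult_at_dvd linear_power_mult_at_dvd] by blast
next
  assume local: "\<forall>\<alpha>\<in>Rset a. \<forall>\<beta>\<in>Rset b. F \<in> ideal_st ([:\<alpha>, 1:] ^ mult_at \<alpha> a) ([:\<beta>, 1:] ^ mult_at \<beta> b)"
  have "F \<in> ideal_st ([:\<alpha>, 1:] ^ mult_at \<alpha> a) b" if "\<alpha> \<in> Rset a" for \<alpha>
    using \<open>b \<noteq> 0\<close> local that
    by (intro complex_poly_root_powers_induct[where P = "\<lambda>q. F \<in> ideal_st _ q" and a = b])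
      (auto intro: ideal_st_const_right ideal_st_coprime_mult_right)
  then show "F \<in> ideal_st a b"
    using \<open>a \<noteq> 0\<close>
    by (intro complex_poly_root_powers_induct[where P = "\<lambda>q. F \<in> ideal_st q b" and a = a])
      (auto intro: ideal_st_const_left ideal_st_coprime_mult_left)
qed

lemma in_sum_mem_ideal_st_iff_linear_powers_dvd:
  assumes "a \<noteq> 0" and "b \<noteq> 0"
  shows "in_sum p \<in> ideal_st a b \<longleftrightarrow>
    (\<forall>\<alpha>\<in>Rset a. \<forall>\<beta>\<in>Rset b. [:\<alpha> + \<beta>, 1:] ^ (mult_at \<alpha> a + mult_at \<beta> b - 1) dvd p)"
  unfolding mem_ideal_st_iff_root_powers[OF assms]
  using assms by (simp add: in_sum_mem_ideal_st_linear_powers_iff mult_at_pos)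

lemma prod_dvd_if_pairwise_coprime:
  fixes f :: "'a \<Rightarrow> 'b::semiring_gcd"
  assumes "finite A"
    and "\<And>x y. x \<in> A \<Longrightarrow> y \<in> A \<Longrightarrow> x \<noteq> y \<Longrightarrow> coprime (f x) (f y)"
    and "\<And>x. x \<in> A \<Longrightarrow> f x dvd d"
  shows "prod f A dvd d"
  using assms
proof (induction A rule: finite_induct)
  case (insert x A)
  then have "coprime (f x) (prod f A)"
    by (intro prod_coprime_right) auto
  with insert show ?case by (simp add: divides_mult)
qed simp

lemma star_dvd_iff:
  assumes "a \<noteq> 0" and "b \<noteq> 0"
  shows "star a b dvd p \<longleftrightarrow>
    (\<forall>\<alpha>\<in>Rset a. \<forall>\<beta>\<in>Rset b. [:\<alpha> + \<beta>, 1:] ^ (mult_at \<alpha> a + mult_at \<beta> b - 1) dvd p)"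
    (is "_ \<longleftrightarrow> (\<forall>\<alpha>\<in>Rset a. \<forall>\<beta>\<in>Rset b. [:\<alpha> + \<beta>, 1:] ^ ?e \<alpha> \<beta> dvd p)")
proof -
  define G where "G = {\<alpha> + \<beta> | \<alpha> \<beta>. \<alpha> \<in> Rset a \<and> \<beta> \<in> Rset b}"
  define S where "S \<gamma> = {?e \<alpha> \<beta> | \<alpha> \<beta>. \<alpha> \<in> Rset a \<and> \<beta> \<in> Rset b \<and> \<alpha> + \<beta> = \<gamma>}" for \<gamma>
  have star: "star a b = (\<Prod>\<gamma>\<in>G. [:\<gamma>, 1:] ^ Max (S \<gamma>))"
    unfolding star_def G_def S_def ..
  have fin: "finite (Rset a)" "finite (Rset b)"
    using assms by (simp_all add: finite_Rset)
  then have "finite G"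
    unfolding G_def using finite_image_set2[of "\<lambda>\<alpha>. \<alpha> \<in> Rset a" "\<lambda>\<beta>. \<beta> \<in> Rset b"] by simp
  have "finite (S \<gamma>)" for \<gamma>
    using fin finite_image_set2[of "\<lambda>\<alpha>. \<alpha> \<in> Rset a" "\<lambda>\<beta>. \<beta> \<in> Rset b" ?e]
    by (auto simp: S_def intro: finite_subset[rotated])
  show ?thesis
  proof
    assume dvd: "star a b dvd p"
    show "\<forall>\<alpha>\<in>Rset a. \<forall>\<beta>\<in>Rset b. [:\<alpha> + \<beta>, 1:] ^ ?e \<alpha> \<beta> dvd p"
    proof (intro ballI)
      fix \<alpha> \<beta> assume "\<alpha> \<in> Rset a" "\<beta> \<in> Rset b"
      then have "\<alpha> + \<beta> \<in> G" and "?e \<alpha> \<beta> \<in> S (\<alpha> + \<beta>)"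
        unfolding G_def S_def by blast+
      then have "[:\<alpha> + \<beta>, 1:] ^ ?e \<alpha> \<beta> dvd [:\<alpha> + \<beta>, 1:] ^ Max (S (\<alpha> + \<beta>))"
        using \<open>finite (S (\<alpha> + \<beta>))\<close> by (intro le_imp_power_dvd) simp
      also have "\<dots> dvd star a b"
        unfolding star using \<open>finite G\<close> \<open>\<alpha> + \<beta> \<in> G\<close> by (rule dvd_prodI)
      finally show "[:\<alpha> + \<beta>, 1:] ^ ?e \<alpha> \<beta> dvd p"
        using dvd by (rule dvd_trans)
    qed
  next
    assume local: "\<forall>\<alpha>\<in>Rset a. \<forall>\<beta>\<in>Rset b. [:\<alpha> + \<beta>, 1:] ^ ?e \<alpha> \<beta> dvd p"
    have "[:\<gamma>, 1:] ^ Max (S \<gamma>) dvd p" if "\<gamma> \<in> G" for \<gamma>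
    proof -
      have "S \<gamma> \<noteq> {}"
        using that unfolding G_def S_def by blast
      then have "Max (S \<gamma>) \<in> S \<gamma>"
        using \<open>finite (S \<gamma>)\<close> by simp
      then show ?thesis
        unfolding S_def using local by auto
    qed
    then show "star a b dvd p"
      unfolding star using \<open>finite G\<close>
      by (intro prod_dvd_if_pairwise_coprime coprime_linear_powers)
  qed
qed

lemma in_sum_mem_ideal_st_iff_star_dvd:
  assumes "a \<noteq> 0" and "b \<noteq> 0"
  shows "in_sum p \<in> ideal_st a b \<longleftrightarrow> star a b dvd p"
  using assms by (simp add: in_sum_mem_ideal_st_iff_linear_powers_dvd star_dvd_iff)

lemma lead_coeff_star: "lead_coeff (star a b) = 1"
  by (simp add: star_def lead_coeff_prod lead_coeff_power)

lemma princ_sum_eq: "princ_sum c = in_sum ` {p. c dvd p}"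
proof -
  have "princ_sum c = (\<lambda>r. in_sum (r * c)) ` UNIV"
    unfolding princ_sum_def sum_ring_def by auto
  also have "\<dots> = in_sum ` (\<lambda>r. r * c) ` UNIV"
    by (simp add: image_image)
  also have "(\<lambda>r. r * c) ` UNIV = {p. c dvd p}"
    by (auto simp: dvd_def mult.commute)
  finally show ?thesis .
qed

lemma ideal_st_inter_sum_ring:
  assumes "a \<noteq> 0" and "b \<noteq> 0"
  shows "ideal_st a b \<inter> sum_ring = princ_sum (star a b)"
  using in_sum_mem_ideal_st_iff_star_dvd[OF assms]
  by (auto simp: princ_sum_eq sum_ring_def)

lemma princ_sum_monic_inject:
  assumes "lead_coeff c = 1" and "lead_coeff d = 1" and "princ_sum c = princ_sum d"
  shows "c = d"
proof (rule associated_eqI)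
  have "in_sum c \<in> princ_sum d" and "in_sum d \<in> princ_sum c"
    using assms(3) by (auto simp: princ_sum_eq)
  then show "c dvd d" and "d dvd c"
    by (auto simp: princ_sum_eq in_sum_inject)
  show "normalize c = c" and "normalize d = d"
    using assms(1,2) by (simp_all add: normalize_poly_eq_map_poly)
qed

theorem proposition2p1:
  fixes a b :: "complex poly"
  assumes "a \<noteq> 0" and "b \<noteq> 0"
  shows "is_bullet a b (star a b) \<and> (\<forall>c. is_bullet a b c \<longrightarrow> c = star a b)"
proof -
  have eq: "ideal_st a b \<inter> sum_ring = princ_sum (star a b)"
    using assms by (rule ideal_st_inter_sum_ring)
  then have "is_bullet a b (star a b)"
    by (simp add: is_bullet_def lead_coeff_star)
  moreover have "c = star a b" if "is_bullet a b c" for c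
    using that eq lead_coeff_star by (auto simp: is_bullet_def intro: princ_sum_monic_inject)
  ultimately show ?thesis by blast
qed

end
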